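(* Every randomized online algorithm for non-clairvoyant dynamic bin packing that makes $o(n)$ migrations in expectation (on instances with $n$ items) has competitive ratio at least $\frac{\mu}{6}$, where $\mu$ is the ratio of the longest to the shortest item duration.
   Context: Dynamic bin packing: bins have capacity $1$; items arrive online at times $a_i\ge0$ with size $s_i\in[0,1]$ and duration $d_i>0$, present during $[a_i,a_i+d_i)$; only the size is revealed at arrival. Each arriving item is placed in an open bin with enough remaining capacity or a new bin; a migration moves an already placed item to another bin, counted by number of moves. Cost = total active time $\int_0^\infty(\text{number of nonempty bins at } t)\,dt$. $\mathrm{OPT}(I)=\int_0^\infty\mathrm{OPT}_t\,dt$ with $\mathrm{OPT}_t$ the minimum number of unit bins to pack the items present at time $t$. Competitive ratio at least $\gamma$ means: for every $\beta<\gamma$ there is an instance (with durations ratio $\mu$) on which the expected cost exceeds $\beta\,\mathrm{OPT}$. *)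

theory Defs
  imports "HOL-Probability.Probability" "HOL-Library.Landau_Symbols"
begin

type_synonym item = "real \<times> real \<times> real"

definition arr :: "item \<Rightarrow> real" where "arr x = fst x"
definition size_of :: "item \<Rightarrow> real" where "size_of x = fst (snd x)"
definition dur :: "item \<Rightarrow> real" where "dur x = snd (snd x)"

definition valid_instance :: "item list \<Rightarrow> bool" where
  "valid_instance I \<longleftrightarrow>
     (\<forall>x \<in> set I. 0 \<le> arr x \<and> 0 \<le> size_of x \<and> size_of x \<le> 1 \<and> 0 < dur x)"

definition has_dur_ratio :: "real \<Rightarrow> item list \<Rightarrow> bool" where
  "has_dur_ratio \<mu> I \<longleftrightarrow> I \<noteq> [] \<and> Max (dur ` set I) / Min (dur ` set I) = \<mu>"

definition active :: "item list \<Rightarrow> nat \<Rightarrow> real \<Rightarrow> bool" where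
  "active I i t \<longleftrightarrow> i < length I \<and> arr (I ! i) \<le> t \<and> t < arr (I ! i) + dur (I ! i)"

text \<open>What an online non-clairvoyant algorithm knows at time t: for each item that
has arrived by time t its arrival time and size, and its duration only if it has
already departed (departure time at most t).\<close>
definition view :: "item list \<Rightarrow> real \<Rightarrow> nat \<Rightarrow> (real \<times> real \<times> real option) option" where
  "view I t i =
     (if i < length I \<and> arr (I ! i) \<le> t
      then Some (arr (I ! i), size_of (I ! i),
                 if arr (I ! i) + dur (I ! i) \<le> t then Some (dur (I ! i)) else None)
      else None)"

text \<open>A (deterministic) packing: P I i t is the bin (a natural-number label) holding
item i at time t.  Only the values while the item is present matter.\<close>
type_synonym packing_alg = "item list \<Rightarrow> nat \<Rightarrow> real \<Rightarrow> nat"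

text \<open>Deterministic online non-clairvoyant algorithm with migrations: the packing is
feasible (unit capacity) at every time, and the bin of every arrived item at time t
depends only on the information revealed up to time t.\<close>
definition det_online_alg :: "packing_alg \<Rightarrow> bool" where
  "det_online_alg P \<longleftrightarrow>
     (\<forall>I t b. valid_instance I \<longrightarrow>
        (\<Sum>i \<in> {i. active I i t \<and> P I i t = b}. size_of (I ! i)) \<le> 1) \<and>
     (\<forall>I J t. valid_instance I \<longrightarrow> valid_instance J \<longrightarrow> view I t = view J t \<longrightarrow>
        (\<forall>i. i < length I \<and> arr (I ! i) \<le> t \<longrightarrow> P I i t = P J i t))"

text \<open>Number of moves of a function f (bin of one item over time) during [a, a+d):
the number of bin changes, i.e. the supremum over finite increasing sequences of
sample times in [a, a+d) of the number of consecutive samples in different bins.\<close>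
definition moves :: "(real \<Rightarrow> nat) \<Rightarrow> real \<Rightarrow> real \<Rightarrow> ennreal" where
  "moves f a d = Sup {ennreal (real (card {j. j < k \<and> f (ts j) \<noteq> f (ts (Suc j))})) | ts k.
                        (\<forall>j \<le> k. a \<le> ts j \<and> ts j < a + d) \<and> (\<forall>j < k. ts j < ts (Suc j))}"

definition migrations :: "packing_alg \<Rightarrow> item list \<Rightarrow> ennreal" where
  "migrations P I = (\<Sum>i < length I. moves (P I i) (arr (I ! i)) (dur (I ! i)))"

text \<open>Cost = total active time = integral of the number of nonempty bins.\<close>
definition cost :: "packing_alg \<Rightarrow> item list \<Rightarrow> ennreal" where
  "cost P I = (\<integral>\<^sup>+ t. ennreal (real (card {P I i t | i. active I i t})) \<partial>lborel)"

definition opt_at :: "item list \<Rightarrow> real \<Rightarrow> nat" where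
  "opt_at I t = (LEAST k. \<exists>f :: nat \<Rightarrow> nat.
       (\<forall>i. active I i t \<longrightarrow> f i < k) \<and>
       (\<forall>b. (\<Sum>i \<in> {i. active I i t \<and> f i = b}. size_of (I ! i)) \<le> 1))"

definition OPT :: "item list \<Rightarrow> ennreal" where
  "OPT I = (\<integral>\<^sup>+ t. ennreal (real (opt_at I t)) \<partial>lborel)"

text \<open>A randomized online algorithm: a probability space M together with a
deterministic online algorithm A w for every outcome w, such that cost and number
of migrations are random variables on every valid instance.\<close>
definition randomized_online_alg :: "'w measure \<Rightarrow> ('w \<Rightarrow> packing_alg) \<Rightarrow> bool" where
  "randomized_online_alg M A \<longleftrightarrow>
     prob_space M \<and>
     (\<forall>w \<in> space M. det_online_alg (A w)) \<and>
     (\<forall>I. valid_instance I \<longrightarrow>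
        (\<lambda>w. cost (A w) I) \<in> borel_measurable M \<and>
        (\<lambda>w. migrations (A w) I) \<in> borel_measurable M)"

definition expected_cost :: "'w measure \<Rightarrow> ('w \<Rightarrow> packing_alg) \<Rightarrow> item list \<Rightarrow> ennreal" where
  "expected_cost M A I = (\<integral>\<^sup>+ w. cost (A w) I \<partial>M)"

definition expected_migrations :: "'w measure \<Rightarrow> ('w \<Rightarrow> packing_alg) \<Rightarrow> item list \<Rightarrow> ennreal" where
  "expected_migrations M A I = (\<integral>\<^sup>+ w. migrations (A w) I \<partial>M)"

end

theory Submission
  imports Defs
begin

(* Let k \<ge> 4\<mu> and m = k r.  At time 0, 2km items of size 1/k arrive in m groups of 2k;
   in each group one selected item stays until time \<mu>, all others leave at time 1.
   At time 0 the algorithm cannot tell these instances apart, so its packing at time 0 does not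
   depend on the selection.  A bin holds at most k items, hence for a uniformly random selection
   the m long items lie in at least m/2 distinct bins on average, and each of these bins stays
   open during [1, \<mu>) unless its long item migrates.  So cost + (\<mu> - 1) * migrations is at
   least 2m + (\<mu> - 1) m / 2 on average, while OPT \<le> 2m + r (\<mu> - 1) because the long items
   fit into r bins.  With o(n) migrations the migration term is at most m/8 once r is large,
   and k \<ge> 4\<mu> turns the remaining gap into a ratio of at least \<mu>/6. *)

lemma card_le_mult_card_image:
  assumes "finite A" "\<And>b. card {a \<in> A. f a = b} \<le> k"
  shows "card A \<le> k * card (f ` A)"
proof -
  have "card A = card (\<Union>b\<in>f ` A. {a \<in> A. f a = b})" by (rule arg_cong[where f = card]) auto
  also have "\<dots> \<le> (\<Sum>b\<in>f ` A. card {a \<in> A. f a = b})" using assms(1) by (intro card_UN_le) simp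
  also have "\<dots> \<le> k * card (f ` A)" using assms(2) sum_bounded_above[of "f ` A" _ k] by (simp add: mult.commute)
  finally show ?thesis .
qed

lemma card_le_if_same_quotient:
  fixes S :: "nat set"
  assumes "0 < k" "\<And>i. i \<in> S \<Longrightarrow> i div k = b"
  shows "card S \<le> k"
proof -
  have "inj_on (\<lambda>i. i mod k) S"
    using assms(2) by (intro inj_onI) (metis div_mult_mod_eq)
  moreover have "(\<lambda>i. i mod k) ` S \<subseteq> {..<k}" using assms(1) by auto
  ultimately show ?thesis by (metis card_inj_on_le card_lessThan finite_lessThan)
qed

lemma card_image_le_card_image_add:
  assumes "finite A"
  shows "card (f ` A) \<le> card (g ` A) + card {a \<in> A. f a \<noteq> g a}"
proof -
  have "f ` A \<subseteq> g ` A \<union> f ` {a \<in> A. f a \<noteq> g a}" by force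
  then have "card (f ` A) \<le> card (g ` A \<union> f ` {a \<in> A. f a \<noteq> g a})"
    using assms by (intro card_mono) auto
  also have "\<dots> \<le> card (g ` A) + card {a \<in> A. f a \<noteq> g a}"
    using assms by (intro order.trans[OF card_Un_le] add_left_mono card_image_le) auto
  finally show ?thesis .
qed

lemma card_le_card_image_add_collisions:
  assumes "finite L"
  shows "card L \<le> card (h ` L) + card {(i, j) \<in> L \<times> L. i \<noteq> j \<and> h i = h j}"
proof -
  define U where "U = {i \<in> L. \<forall>j \<in> L. h j = h i \<longrightarrow> j = i}"
  define C where "C = {(i, j) \<in> L \<times> L. i \<noteq> j \<and> h i = h j}"
  have "card U = card (h ` U)"
    by (rule card_image[symmetric]) (auto simp: U_def inj_on_def)
  also have "\<dots> \<le> card (h ` L)"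
    using assms by (intro card_mono) (auto simp: U_def)
  finally have U: "card U \<le> card (h ` L)" .
  have "L - U = fst ` C" by (auto simp: U_def C_def image_iff) metis
  moreover have "finite C" using assms by (intro finite_subset[of C "L \<times> L"]) (auto simp: C_def)
  ultimately have "card (L - U) \<le> card C" by (simp add: card_image_le)
  moreover have "card L = card U + card (L - U)"
    using card_Int_Diff[OF assms, of U] by (simp add: U_def Int_absorb1)
  ultimately show ?thesis using U by (simp add: C_def)
qed

lemma card_PiE_fixing:
  assumes "finite A" "S \<subseteq> A" "\<And>a. a \<in> S \<Longrightarrow> c a \<in> B"
  shows "card {\<phi> \<in> PiE A (\<lambda>_. B). \<forall>a\<in>S. \<phi> a = c a} = card B ^ card (A - S)"
proof -
  have "{\<phi> \<in> PiE A (\<lambda>_. B). \<forall>a\<in>S. \<phi> a = c a} = PiE A (\<lambda>a. if a \<in> S then {c a} else B)"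
    using assms(2,3) by (auto simp: PiE_iff extensional_def split: if_splits)
  then have "card {\<phi> \<in> PiE A (\<lambda>_. B). \<forall>a\<in>S. \<phi> a = c a} = (\<Prod>a\<in>A. if a \<in> S then 1 else card B)"
    using assms(1) by (auto simp: card_PiE intro!: prod.cong)
  also have "\<dots> = (\<Prod>a\<in>A - S. card B)"
    using assms(1) by (intro prod.mono_neutral_cong_right) auto
  also have "\<dots> = card B ^ card (A - S)" by simp
  finally show ?thesis .
qed

section \<open>Selecting one item per group\<close>

definition selections :: "nat \<Rightarrow> nat \<Rightarrow> (nat \<Rightarrow> nat) set" where
  "selections G m = PiE {..<m} (\<lambda>_. {..<G})"

(* Items 0, ..., G * m - 1 form m groups of G consecutive items; the selection \<phi> picks
   item \<phi> a of group a, i.e. the item a * G + \<phi> a. *)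
definition selected :: "nat \<Rightarrow> nat \<Rightarrow> (nat \<Rightarrow> nat) \<Rightarrow> nat set" where
  "selected G m \<phi> = {i. i < G * m \<and> \<phi> (i div G) = i mod G}"

lemma finite_selections: "finite (selections G m)"
  unfolding selections_def by (simp add: finite_PiE)

lemma card_selections: "card (selections G m) = G ^ m"
  unfolding selections_def by (simp add: card_PiE)

lemma card_selected:
  assumes "\<phi> \<in> selections G m"
  shows "card (selected G m \<phi>) = m"
proof -
  have \<phi>_less: "\<phi> a < G" if "a < m" for a
    using assms that unfolding selections_def by (simp add: PiE_iff)
  have "selected G m \<phi> = (\<lambda>a. a * G + \<phi> a) ` {..<m}"
  proof (intro set_eqI iffI)
    fix i assume "i \<in> selected G m \<phi>"
    then have "i < m * G" "\<phi> (i div G) = i mod G" by (simp_all add: selected_def mult.commute)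
    then have "i div G < m" "i = i div G * G + \<phi> (i div G)"
      by (simp_all add: less_mult_imp_div_less)
    then show "i \<in> (\<lambda>a. a * G + \<phi> a) ` {..<m}" by blast
  next
    fix i assume "i \<in> (\<lambda>a. a * G + \<phi> a) ` {..<m}"
    then obtain a where a: "a < m" "i = a * G + \<phi> a" by blast
    have "a * G + \<phi> a < Suc a * G" using \<phi>_less[OF a(1)] by simp
    also have "\<dots> \<le> m * G" using a(1) by (intro mult_right_mono) auto
    finally have "i < G * m" using a(2) by (simp add: mult.commute)
    moreover have "i div G = a" "i mod G = \<phi> a" using a \<phi>_less[OF a(1)] by simp_all
    ultimately show "i \<in> selected G m \<phi>" by (simp add: selected_def)
  qed
  moreover have "inj_on (\<lambda>a. a * G + \<phi> a) {..<m}"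
  proof (rule inj_onI)
    fix a b assume "a \<in> {..<m}" "b \<in> {..<m}" and eq: "a * G + \<phi> a = b * G + \<phi> b"
    then have a: "\<phi> a < G" and b: "\<phi> b < G" by (simp_all add: \<phi>_less)
    have "a = (a * G + \<phi> a) div G" using a by simp
    also have "\<dots> = b" using b by (simp only: eq) simp
    finally show "a = b" .
  qed
  ultimately show ?thesis by (simp add: card_image)
qed

lemma card_selections_selecting_both:
  assumes "i < G * m" "j < G * m" "i \<noteq> j"
  shows "card {\<phi> \<in> selections G m. i \<in> selected G m \<phi> \<and> j \<in> selected G m \<phi>} \<le> G ^ (m - 2)"
proof (cases "i div G = j div G")
  case True
  then have "i mod G \<noteq> j mod G" using assms(3) by (metis div_mult_mod_eq)
  then have "{\<phi> \<in> selections G m. i \<in> selected G m \<phi> \<and> j \<in> selected G m \<phi>} = {}"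
    using True by (auto simp: selected_def)
  then show ?thesis by (simp only: card.empty)
next
  case False
  have G: "0 < G" using assms(1) by (cases G) auto
  define S where "S = {i div G, j div G}"
  define c where "c a = (if a = i div G then i mod G else j mod G)" for a
  have S: "S \<subseteq> {..<m}" using assms(1,2) by (auto simp: S_def less_mult_imp_div_less mult.commute)
  have "{\<phi> \<in> selections G m. i \<in> selected G m \<phi> \<and> j \<in> selected G m \<phi>}
      = {\<phi> \<in> PiE {..<m} (\<lambda>_. {..<G}). \<forall>a\<in>S. \<phi> a = c a}"
    using assms(1,2) False by (auto simp: selections_def selected_def S_def c_def)
  also have "card \<dots> = card {..<G} ^ card ({..<m} - S)"
    using S G by (intro card_PiE_fixing) (auto simp: S_def c_def)
  also have "card ({..<m} - S) = m - 2"
    using S False by (simp add: card_Diff_subset S_def)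
  finally show ?thesis by simp
qed

lemma card_collisions_le:
  assumes "\<And>i. i < N \<Longrightarrow> card {j. j < N \<and> h j = h i} \<le> k"
  shows "card {(i, j) \<in> {..<N} \<times> {..<N}. i \<noteq> j \<and> h i = h j} \<le> N * (k - 1)"
proof -
  have "{(i, j) \<in> {..<N} \<times> {..<N}. i \<noteq> j \<and> h i = h j} = (SIGMA i:{..<N}. {j. j < N \<and> h j = h i} - {i})"
    by auto
  then have "card {(i, j) \<in> {..<N} \<times> {..<N}. i \<noteq> j \<and> h i = h j} = (\<Sum>i<N. card ({j. j < N \<and> h j = h i} - {i}))"
    by simp
  also have "\<dots> \<le> (\<Sum>i<N. k - 1)" using assms by (intro sum_mono) (simp add: diff_le_mono)
  finally show ?thesis by simp
qed

lemma sum_card_selected_collisions_le: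
  "(\<Sum>\<phi>\<in>selections G m. card {(i, j) \<in> selected G m \<phi> \<times> selected G m \<phi>. i \<noteq> j \<and> h i = h j})
    \<le> card {(i, j) \<in> {..<G * m} \<times> {..<G * m}. i \<noteq> j \<and> h i = h j} * G ^ (m - 2)"
proof -
  define C where "C = {(i, j) \<in> {..<G * m} \<times> {..<G * m}. i \<noteq> j \<and> h i = h j}"
  define coll where "coll \<phi> = {(i, j) \<in> selected G m \<phi> \<times> selected G m \<phi>. i \<noteq> j \<and> h i = h j}" for \<phi>
  have "finite C" by (auto simp: C_def intro: finite_subset[of _ "{..<G * m} \<times> {..<G * m}"])
  have "(\<Sum>\<phi>\<in>selections G m. card (coll \<phi>)) = (\<Sum>\<phi>\<in>selections G m. \<Sum>p\<in>C. of_bool (p \<in> coll \<phi>))"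
  proof (intro sum.cong refl)
    fix \<phi> have "C \<inter> {p. p \<in> coll \<phi>} = coll \<phi>" by (auto simp: C_def coll_def selected_def)
    then show "card (coll \<phi>) = (\<Sum>p\<in>C. of_bool (p \<in> coll \<phi>))" using \<open>finite C\<close> by simp
  qed
  also have "\<dots> = (\<Sum>p\<in>C. \<Sum>\<phi>\<in>selections G m. of_bool (p \<in> coll \<phi>))" by (rule sum.swap)
  also have "\<dots> \<le> (\<Sum>p\<in>C. G ^ (m - 2))"
  proof (intro sum_mono)
    fix p assume "p \<in> C"
    then obtain i j where p: "p = (i, j)" "i < G * m" "j < G * m" "i \<noteq> j" "h i = h j" by (auto simp: C_def)
    let ?both = "{\<phi> \<in> selections G m. i \<in> selected G m \<phi> \<and> j \<in> selected G m \<phi>}"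
    have "selections G m \<inter> {\<phi>. i \<in> selected G m \<phi> \<and> j \<in> selected G m \<phi>} = ?both" by blast
    then have "(\<Sum>\<phi>\<in>selections G m. of_bool (p \<in> coll \<phi>)) = card ?both"
      using p finite_selections by (simp add: coll_def)
    also have "\<dots> \<le> G ^ (m - 2)" using p by (intro card_selections_selecting_both)
    finally show "(\<Sum>\<phi>\<in>selections G m. of_bool (p \<in> coll \<phi>)) \<le> G ^ (m - 2)" .
  qed
  finally show ?thesis by (simp add: C_def coll_def)
qed

(* Two items of different groups are both selected by a 1 / G^2 fraction of the selections and
   every item shares its h-value with at most k - 1 others, so on average the selected items
   lose at most m (k - 1) / G \<le> m / 2 distinct values. *)
lemma sum_card_image_selected_ge:
  fixes h :: "nat \<Rightarrow> 'b"
  assumes k: "0 < k" and m: "2 \<le> m"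
    and bin: "\<And>i. i < 2 * k * m \<Longrightarrow> card {j. j < 2 * k * m \<and> h j = h i} \<le> k"
  shows "real ((2 * k) ^ m) * real m / 2 \<le> (\<Sum>\<phi>\<in>selections (2 * k) m. real (card (h ` selected (2 * k) m \<phi>)))"
proof -
  define G where "G = 2 * k"
  define N where "N = G * m"
  define coll where "coll \<phi> = {(i, j) \<in> selected G m \<phi> \<times> selected G m \<phi>. i \<noteq> j \<and> h i = h j}" for \<phi>
  have "(\<Sum>\<phi>\<in>selections G m. card (coll \<phi>)) \<le> N * (k - 1) * G ^ (m - 2)"
    using sum_card_selected_collisions_le[of G m h] card_collisions_le[of N h k] bin
    unfolding coll_def N_def G_def by (meson mult_le_mono1 order.trans)
  then have "real (\<Sum>\<phi>\<in>selections G m. card (coll \<phi>)) \<le> real (N * (k - 1) * G ^ (m - 2))"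
    by (simp only: of_nat_le_iff)
  then have collisions: "(\<Sum>\<phi>\<in>selections G m. real (card (coll \<phi>))) \<le> real N * (real k - 1) * real G ^ (m - 2)"
    using k by (simp add: of_nat_diff)
  have "(\<Sum>\<phi>\<in>selections G m. real m - real (card (coll \<phi>)))
      \<le> (\<Sum>\<phi>\<in>selections G m. real (card (h ` selected G m \<phi>)))"
  proof (intro sum_mono)
    fix \<phi> assume "\<phi> \<in> selections G m"
    then have "card (selected G m \<phi>) = m" by (rule card_selected)
    moreover have "finite (selected G m \<phi>)" by (simp add: selected_def)
    ultimately show "real m - real (card (coll \<phi>)) \<le> real (card (h ` selected G m \<phi>))"
      using card_le_card_image_add_collisions[of "selected G m \<phi>" h] by (simp add: coll_def)
  qed
  moreover have "real (G ^ m) * real m / 2 \<le> (\<Sum>\<phi>\<in>selections G m. real m - real (card (coll \<phi>)))"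
  proof -
    define P where "P = real G ^ (m - 2)"
    obtain d where "m = 2 + d" using le_Suc_ex[OF m] by blast
    then have "real (G ^ m) = 4 * real k * real k * P" by (simp add: P_def G_def power_add power2_eq_square)
    moreover have "real N = 2 * real k * real m" by (simp add: N_def G_def)
    ultimately have "real (G ^ m) * real m / 2 = real (G ^ m) * real m - real N * (real k - 1) * P - 2 * real k * real m * P"
      by (simp add: algebra_simps)
    also have "\<dots> \<le> real (G ^ m) * real m - real N * (real k - 1) * P" by (simp add: P_def)
    also have "\<dots> \<le> (\<Sum>\<phi>\<in>selections G m. real m - real (card (coll \<phi>)))"
      using collisions by (simp add: sum_subtractf card_selections P_def)
    finally show ?thesis .
  qed
  ultimately show ?thesis by (simp add: G_def)
qed

section \<open>Online algorithms, cost and OPT\<close>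

lemma det_online_alg_card_bin_le:
  assumes "det_online_alg P" "valid_instance I" "0 < k"
    and "\<And>i. i < length I \<Longrightarrow> size_of (I ! i) = 1 / real k"
  shows "card {i. active I i t \<and> P I i t = b} \<le> k"
proof -
  let ?S = "{i. active I i t \<and> P I i t = b}"
  have S: "?S \<subseteq> {..<length I}" by (auto simp: active_def)
  have "(\<Sum>i\<in>?S. size_of (I ! i)) \<le> 1" using assms(1,2) unfolding det_online_alg_def by blast
  moreover have "(\<Sum>i\<in>?S. size_of (I ! i)) = real (card ?S) / real k"
    using S assms(4) by (simp add: subset_iff)
  ultimately show ?thesis using assms(3) by (simp add: divide_le_eq)
qed

lemma det_online_alg_card_active_le:
  assumes "det_online_alg P" "valid_instance I" "0 < k"
    and "\<And>i. i < length I \<Longrightarrow> size_of (I ! i) = 1 / real k"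
  shows "card {i. active I i t} \<le> k * card {P I i t | i. active I i t}"
proof -
  have "finite {i. active I i t}" by (rule finite_subset[of _ "{..<length I}"]) (auto simp: active_def)
  moreover have "card {i \<in> {i. active I i t}. P I i t = b} \<le> k" for b
    using det_online_alg_card_bin_le[OF assms] by simp
  ultimately have "card {i. active I i t} \<le> k * card ((\<lambda>i. P I i t) ` {i. active I i t})"
    by (rule card_le_mult_card_image)
  also have "(\<lambda>i. P I i t) ` {i. active I i t} = {P I i t | i. active I i t}" by blast
  finally show ?thesis .
qed

lemma one_le_moves:
  assumes "a \<le> s" "s < t" "t < a + d" "f s \<noteq> f t"
  shows "1 \<le> moves f a d"
proof -
  define ts where "ts j = (if j = 0 then s else t)" for j :: nat
  have "{j. j < 1 \<and> f (ts j) \<noteq> f (ts (Suc j))} = {0}" using assms(4) by (auto simp: ts_def)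
  moreover have "(\<forall>j \<le> 1. a \<le> ts j \<and> ts j < a + d) \<and> (\<forall>j < 1. ts j < ts (Suc j))"
    using assms(1-3) by (auto simp: ts_def le_Suc_eq)
  ultimately have "ennreal (real (card {j. j < 1 \<and> f (ts j) \<noteq> f (ts (Suc j))})) \<le> moves f a d"
    unfolding moves_def by (intro Sup_upper) blast
  then show ?thesis using \<open>_ = {0}\<close> by simp
qed

lemma card_le_migrations:
  assumes "S \<subseteq> {..<length I}"
    and "\<And>i. i \<in> S \<Longrightarrow>
           \<exists>s t. arr (I ! i) \<le> s \<and> s < t \<and> t < arr (I ! i) + dur (I ! i) \<and> P I i s \<noteq> P I i t"
  shows "of_nat (card S) \<le> migrations P I"
proof -
  have "of_nat (card S) = (\<Sum>i\<in>S. 1 :: ennreal)" by simp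
  also have "\<dots> \<le> (\<Sum>i\<in>S. moves (P I i) (arr (I ! i)) (dur (I ! i)))"
    using assms(2) one_le_moves by (intro sum_mono) blast
  also have "\<dots> \<le> migrations P I"
    unfolding migrations_def using assms(1) by (intro sum_mono2) auto
  finally show ?thesis .
qed

lemma opt_at_le:
  assumes "\<And>i. active I i t \<Longrightarrow> f i < q"
    and "\<And>b. (\<Sum>i \<in> {i. active I i t \<and> f i = b}. size_of (I ! i)) \<le> 1"
  shows "opt_at I t \<le> q"
  unfolding opt_at_def using assms by (intro Least_le) blast

lemma opt_at_le_by_index:
  assumes "0 < k" "\<And>i. i < length I \<Longrightarrow> size_of (I ! i) \<le> 1 / real k"
    and "inj_on e {i. active I i t}" "e ` {i. active I i t} \<subseteq> {..<k * q}"
  shows "opt_at I t \<le> q"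
proof (rule opt_at_le[where f = "\<lambda>i. e i div k"])
  fix i assume "active I i t"
  then show "e i div k < q" using assms(4) by (auto simp: less_mult_imp_div_less mult.commute)
next
  fix b
  let ?T = "{i. active I i t \<and> e i div k = b}"
  have "finite ?T" by (rule finite_subset[of _ "{..<length I}"]) (auto simp: active_def)
  have "card ?T = card (e ` ?T)"
    using assms(3) by (intro card_image[symmetric]) (auto intro: inj_on_subset)
  also have "\<dots> \<le> k" using assms(1) by (intro card_le_if_same_quotient[where b = b]) auto
  finally have "real (card ?T) * (1 / real k) \<le> 1" using assms(1) by simp
  moreover have "(\<Sum>i\<in>?T. size_of (I ! i)) \<le> real (card ?T) * (1 / real k)"
    using assms(2) by (intro sum_bounded_above) (simp add: active_def)
  ultimately show "(\<Sum>i\<in>?T. size_of (I ! i)) \<le> 1" by linarith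
qed

lemma ennreal_plus_le: "ennreal (x + y) \<le> ennreal x + ennreal y"
proof -
  have "ennreal (x + y) \<le> ennreal (max 0 x + max 0 y)" by (intro ennreal_leI) simp
  also have "\<dots> = ennreal x + ennreal y" by (simp add: ennreal_max_0)
  finally show ?thesis .
qed

lemma nn_integral_two_steps:
  assumes "1 \<le> \<mu>"
  shows "(\<integral>\<^sup>+t. a * indicator {0..<1} t + b * indicator {1..<\<mu>} t \<partial>lborel) = a + b * ennreal (\<mu> - 1)"
proof -
  have "(\<integral>\<^sup>+t. a * indicator {0..<1} t + b * indicator {1..<\<mu>} t \<partial>lborel)
      = a * emeasure lborel {0..<1::real} + b * emeasure lborel {1..<\<mu>}"
    by (simp add: nn_integral_add nn_integral_cmult_indicator)
  then show ?thesis using assms by simp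
qed

lemma nn_integral_le_two_steps:
  assumes "1 \<le> \<mu>"
    and "\<And>t. 0 \<le> t \<Longrightarrow> t < 1 \<Longrightarrow> f t \<le> a" "\<And>t. 1 \<le> t \<Longrightarrow> t < \<mu> \<Longrightarrow> f t \<le> b"
    and "\<And>t. t < 0 \<or> \<mu> \<le> t \<Longrightarrow> f t = 0"
  shows "(\<integral>\<^sup>+t. f t \<partial>lborel) \<le> a + b * ennreal (\<mu> - 1)"
proof -
  have "(\<integral>\<^sup>+t. f t \<partial>lborel)
      \<le> (\<integral>\<^sup>+t. a * indicator {0..<1} t + b * indicator {1..<\<mu>} t \<partial>lborel)"
  proof (intro nn_integral_mono)
    fix t :: real
    consider "t < 0 \<or> \<mu> \<le> t" | "0 \<le> t" "t < 1" | "1 \<le> t" "t < \<mu>" by linarith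
    then show "f t \<le> a * indicator {0..<1} t + b * indicator {1..<\<mu>} t"
      by cases (use assms in auto)
  qed
  then show ?thesis using assms(1) by (simp add: nn_integral_two_steps)
qed

lemma two_steps_le_nn_integral:
  assumes "1 \<le> \<mu>"
    and "\<And>t. 0 \<le> t \<Longrightarrow> t < 1 \<Longrightarrow> a \<le> f t" "\<And>t. 1 \<le> t \<Longrightarrow> t < \<mu> \<Longrightarrow> b \<le> f t"
  shows "a + b * ennreal (\<mu> - 1) \<le> (\<integral>\<^sup>+t. f t \<partial>lborel)"
proof -
  have "(\<integral>\<^sup>+t. a * indicator {0..<1} t + b * indicator {1..<\<mu>} t \<partial>lborel)
      \<le> (\<integral>\<^sup>+t. f t \<partial>lborel)"
  proof (intro nn_integral_mono)
    fix t :: real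
    consider "t < 0 \<or> \<mu> \<le> t" | "0 \<le> t" "t < 1" | "1 \<le> t" "t < \<mu>" by linarith
    then show "a * indicator {0..<1} t + b * indicator {1..<\<mu>} t \<le> f t"
      by cases (use assms in \<open>auto simp: indicator_def\<close>)
  qed
  then show ?thesis using assms(1) by (simp add: nn_integral_two_steps)
qed

(* The number of nonempty bins need not be measurable in t, so the integral cannot be split
   additively; the bound comes from a pointwise minorant only. *)
lemma cost_ge_two_phases:
  fixes a b c :: nat
  assumes "1 \<le> \<mu>"
    and "\<And>t. 0 \<le> t \<Longrightarrow> t < 1 \<Longrightarrow> a \<le> card {P I i t | i. active I i t}"
    and "\<And>t. 1 \<le> t \<Longrightarrow> t < \<mu> \<Longrightarrow> b \<le> card {P I i t | i. active I i t} + c"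
  shows "ennreal (real a + real b * (\<mu> - 1)) \<le> cost P I + of_nat c * ennreal (\<mu> - 1)"
proof -
  have "real a + real b * (\<mu> - 1) = (real a + (real b - real c) * (\<mu> - 1)) + real c * (\<mu> - 1)"
    by (simp add: algebra_simps)
  then have "ennreal (real a + real b * (\<mu> - 1))
      \<le> ennreal (real a + (real b - real c) * (\<mu> - 1)) + ennreal (real c * (\<mu> - 1))"
    by (metis ennreal_plus_le)
  also have "ennreal (real a + (real b - real c) * (\<mu> - 1))
      \<le> ennreal (real a) + ennreal ((real b - real c) * (\<mu> - 1))"
    by (rule ennreal_plus_le)
  also have "\<dots> = ennreal (real a) + ennreal (real b - real c) * ennreal (\<mu> - 1)"
    using assms(1) by (simp add: ennreal_mult'')
  also have "\<dots> \<le> cost P I"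
    unfolding cost_def
  proof (rule two_steps_le_nn_integral[OF assms(1)])
    fix t :: real
    assume "0 \<le> t" "t < 1"
    then show "ennreal (real a) \<le> ennreal (real (card {P I i t | i. active I i t}))"
      using assms(2) by (simp add: ennreal_leI)
  next
    fix t :: real
    assume "1 \<le> t" "t < \<mu>"
    then have "real b - real c \<le> real (card {P I i t | i. active I i t})" using assms(3)[of t] by linarith
    then show "ennreal (real b - real c) \<le> ennreal (real (card {P I i t | i. active I i t}))"
      by (rule ennreal_leI)
  qed
  also have "ennreal (real c * (\<mu> - 1)) = of_nat c * ennreal (\<mu> - 1)"
    by (simp add: ennreal_mult' ennreal_of_nat_eq_real_of_nat)
  finally show ?thesis by (simp add: add_right_mono)
qed

section \<open>The adversarial instances\<close>

definition uniform_items :: "nat \<Rightarrow> nat \<Rightarrow> (nat \<Rightarrow> real) \<Rightarrow> item list" where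
  "uniform_items k N d = map (\<lambda>i. (0, 1 / real k, d i)) [0..<N]"

lemma length_uniform_items [simp]: "length (uniform_items k N d) = N"
  by (simp add: uniform_items_def)

lemma uniform_items_nth [simp]:
  assumes "i < N"
  shows "arr (uniform_items k N d ! i) = 0" "size_of (uniform_items k N d ! i) = 1 / real k"
    and "dur (uniform_items k N d ! i) = d i"
  using assms by (simp_all add: uniform_items_def arr_def size_of_def dur_def)

lemma set_uniform_items: "set (uniform_items k N d) = (\<lambda>i. (0, 1 / real k, d i)) ` {..<N}"
  by (auto simp: uniform_items_def)

lemma dur_image_uniform_items: "dur ` set (uniform_items k N d) = d ` {..<N}"
  by (simp add: set_uniform_items image_image dur_def)

lemma valid_uniform_items:
  assumes "0 < k" "\<And>i. i < N \<Longrightarrow> 0 < d i"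
  shows "valid_instance (uniform_items k N d)"
  using assms by (auto simp: valid_instance_def set_uniform_items arr_def size_of_def dur_def)

lemma active_uniform_items: "active (uniform_items k N d) i t \<longleftrightarrow> i < N \<and> 0 \<le> t \<and> t < d i"
  by (auto simp: active_def)

lemma view_uniform_items_at_0:
  assumes "\<And>i. i < N \<Longrightarrow> 0 < d i" "\<And>i. i < N \<Longrightarrow> 0 < d' i"
  shows "view (uniform_items k N d) 0 = view (uniform_items k N d') 0"
proof
  fix i show "view (uniform_items k N d) 0 i = view (uniform_items k N d') 0 i"
    using assms[of i] by (cases "i < N") (simp_all add: view_def not_le)
qed

definition hard_instance :: "real \<Rightarrow> nat \<Rightarrow> nat \<Rightarrow> (nat \<Rightarrow> nat) \<Rightarrow> item list" where
  "hard_instance \<mu> k m \<phi> = uniform_items k (2 * k * m) (\<lambda>i. if i \<in> selected (2 * k) m \<phi> then \<mu> else 1)"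

definition short_instance :: "nat \<Rightarrow> nat \<Rightarrow> item list" where
  "short_instance k m = uniform_items k (2 * k * m) (\<lambda>_. 1)"

lemma valid_hard_instance: "1 \<le> \<mu> \<Longrightarrow> 0 < k \<Longrightarrow> valid_instance (hard_instance \<mu> k m \<phi>)"
  unfolding hard_instance_def by (intro valid_uniform_items) auto

lemma valid_short_instance: "0 < k \<Longrightarrow> valid_instance (short_instance k m)"
  unfolding short_instance_def by (intro valid_uniform_items) auto

lemma has_dur_ratio_hard_instance:
  assumes "1 \<le> \<mu>" "0 < k" "0 < m" "\<phi> \<in> selections (2 * k) m"
  shows "has_dur_ratio \<mu> (hard_instance \<mu> k m \<phi>)"
proof -
  let ?d = "\<lambda>i. if i \<in> selected (2 * k) m \<phi> then \<mu> else 1"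
  define i1 :: nat where "i1 = (if \<phi> 0 = 0 then 1 else 0)"
  have "2 * k \<le> 2 * k * m" using assms(3) by simp
  moreover have long: "\<phi> 0 < 2 * k" using assms(3,4) by (auto simp: selections_def)
  moreover have short: "i1 < 2 * k" using assms(2) by (simp add: i1_def)
  ultimately have "\<phi> 0 < 2 * k * m" "i1 < 2 * k * m" by linarith+
  moreover have "\<phi> 0 \<in> selected (2 * k) m \<phi>" "i1 \<notin> selected (2 * k) m \<phi>"
    using long short \<open>\<phi> 0 < 2 * k * m\<close> by (simp_all add: selected_def i1_def)
  ultimately have "\<mu> \<in> ?d ` {..<2 * k * m}" "1 \<in> ?d ` {..<2 * k * m}"
    by (intro image_eqI[where x = "\<phi> 0"] image_eqI[where x = i1]; simp)+
  then have "?d ` {..<2 * k * m} = {1, \<mu>}" by auto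
  moreover have "hard_instance \<mu> k m \<phi> \<noteq> []" using assms(2,3) by (simp add: hard_instance_def flip: length_0_conv)
  ultimately show ?thesis
    using assms(1) by (simp add: has_dur_ratio_def hard_instance_def dur_image_uniform_items)
qed

lemma det_online_alg_hard_instance_at_0:
  assumes "det_online_alg P" "1 \<le> \<mu>" "0 < k" "i < 2 * k * m"
  shows "P (hard_instance \<mu> k m \<phi>) i 0 = P (short_instance k m) i 0"
proof -
  have "view (hard_instance \<mu> k m \<phi>) 0 = view (short_instance k m) 0"
    unfolding hard_instance_def short_instance_def using assms(2) by (intro view_uniform_items_at_0) auto
  then show ?thesis
    using assms valid_hard_instance[OF assms(2,3)] valid_short_instance[OF assms(3)]
    unfolding det_online_alg_def by (simp add: hard_instance_def)
qed

lemma active_hard_instance: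
  "active (hard_instance \<mu> k m \<phi>) i t \<longleftrightarrow>
     i < 2 * k * m \<and> 0 \<le> t \<and> t < (if i \<in> selected (2 * k) m \<phi> then \<mu> else 1)"
  by (simp add: hard_instance_def active_uniform_items)

lemma opt_at_hard_instance_le_long_phase:
  assumes "0 < k" "m = k * r" "1 \<le> t"
  shows "opt_at (hard_instance \<mu> k m \<phi>) t \<le> r"
proof (rule opt_at_le_by_index[where e = "\<lambda>i. i div (2 * k)", OF assms(1)])
  let ?L = "selected (2 * k) m \<phi>"
  show "size_of (hard_instance \<mu> k m \<phi> ! i) \<le> 1 / real k" if "i < length (hard_instance \<mu> k m \<phi>)" for i
    using that by (simp add: hard_instance_def)
  have "{i. active (hard_instance \<mu> k m \<phi>) i t} \<subseteq> ?L" using assms(3) by (auto simp: active_hard_instance split: if_splits)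
  moreover have "inj_on (\<lambda>i. i div (2 * k)) ?L"
  proof (rule inj_onI)
    fix i j assume "i \<in> ?L" "j \<in> ?L" and div: "i div (2 * k) = j div (2 * k)"
    then have "i mod (2 * k) = j mod (2 * k)" by (simp add: selected_def)
    with div show "i = j" by (metis div_mult_mod_eq)
  qed
  ultimately show "inj_on (\<lambda>i. i div (2 * k)) {i. active (hard_instance \<mu> k m \<phi>) i t}" by (rule inj_on_subset[rotated])
  have "i div (2 * k) < k * r" if "i < 2 * k * m" for i
  proof -
    have "i < m * (2 * k)" using that by (simp only: mult.commute)
    then show ?thesis using assms(2) by (simp add: less_mult_imp_div_less)
  qed
  then show "(\<lambda>i. i div (2 * k)) ` {i. active (hard_instance \<mu> k m \<phi>) i t} \<subseteq> {..<k * r}"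
    by (auto simp: active_hard_instance)
qed

lemma OPT_hard_instance_le:
  assumes "1 \<le> \<mu>" "0 < k" "m = k * r"
  shows "OPT (hard_instance \<mu> k m \<phi>) \<le> ennreal (real (2 * m) + real r * (\<mu> - 1))"
proof -
  let ?I = "hard_instance \<mu> k m \<phi>"
  have "opt_at ?I t \<le> 2 * m" for t
  proof (rule opt_at_le_by_index[where e = "\<lambda>i. i", OF assms(2)])
    show "size_of (?I ! i) \<le> 1 / real k" if "i < length ?I" for i using that by (simp add: hard_instance_def)
    have "2 * k * m = k * (2 * m)" by simp
    then show "(\<lambda>i. i) ` {i. active ?I i t} \<subseteq> {..<k * (2 * m)}" by (auto simp: active_hard_instance)
  qed simp
  then have "ennreal (real (opt_at ?I t)) \<le> ennreal (real (2 * m))" for t by (intro ennreal_leI of_nat_mono)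
  moreover have "ennreal (real (opt_at ?I t)) \<le> ennreal (real r)" if "1 \<le> t" for t
    using opt_at_hard_instance_le_long_phase[OF assms(2,3) that] by (intro ennreal_leI of_nat_mono)
  moreover have "opt_at ?I t = 0" if "t < 0 \<or> \<mu> \<le> t" for t
  proof -
    have "\<not> active ?I i t" for i using that assms(1) by (auto simp: active_hard_instance)
    then have "opt_at ?I t \<le> 0" by (intro opt_at_le[where f = "\<lambda>_. 0"]) auto
    then show ?thesis by simp
  qed
  ultimately have "OPT ?I \<le> ennreal (real (2 * m)) + ennreal (real r) * ennreal (\<mu> - 1)"
    unfolding OPT_def using assms(1) by (intro nn_integral_le_two_steps) auto
  then show ?thesis using assms(1) by (simp add: ennreal_mult)
qed

lemma bins_hard_instance_short_phase_ge:
  assumes "det_online_alg P" "1 \<le> \<mu>" "0 < k" "0 \<le> t" "t < 1"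
  shows "2 * m \<le> card {P (hard_instance \<mu> k m \<phi>) i t | i. active (hard_instance \<mu> k m \<phi>) i t}"
proof -
  let ?I = "hard_instance \<mu> k m \<phi>"
  have "{i. active ?I i t} = {..<2 * k * m}" using assms(2,4,5) by (auto simp: active_hard_instance)
  moreover have size: "\<And>i. i < length ?I \<Longrightarrow> size_of (?I ! i) = 1 / real k"
    by (simp add: hard_instance_def)
  ultimately have "k * (2 * m) \<le> k * card {P ?I i t | i. active ?I i t}"
    using det_online_alg_card_active_le[OF assms(1) valid_hard_instance[OF assms(2,3)] assms(3) size, of t]
    by (simp add: mult.assoc)
  then show ?thesis using assms(3) by simp
qed

definition moved_long_items ::
    "packing_alg \<Rightarrow> real \<Rightarrow> nat \<Rightarrow> nat \<Rightarrow> (nat \<Rightarrow> nat) \<Rightarrow> nat set" where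
  "moved_long_items P \<mu> k m \<phi> =
     {i \<in> selected (2 * k) m \<phi>. \<exists>s. 1 \<le> s \<and> s < \<mu> \<and>
        P (hard_instance \<mu> k m \<phi>) i s \<noteq> P (hard_instance \<mu> k m \<phi>) i 0}"

lemma bins_hard_instance_long_phase_ge:
  assumes "det_online_alg P" "1 \<le> \<mu>" "0 < k" "1 \<le> t" "t < \<mu>"
  shows "card ((\<lambda>i. P (short_instance k m) i 0) ` selected (2 * k) m \<phi>)
    \<le> card {P (hard_instance \<mu> k m \<phi>) i t | i. active (hard_instance \<mu> k m \<phi>) i t}
      + card (moved_long_items P \<mu> k m \<phi>)"
proof -
  let ?I = "hard_instance \<mu> k m \<phi>" and ?L = "selected (2 * k) m \<phi>"
  have L: "?L \<subseteq> {..<2 * k * m}" by (auto simp: selected_def)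
  then have "finite ?L" by (rule finite_subset) simp
  have "{i. active ?I i t} = ?L" using assms(4,5) L by (auto simp: active_hard_instance)
  then have "{P ?I i t | i. active ?I i t} = (\<lambda>i. P ?I i t) ` ?L" by blast
  moreover have "P (short_instance k m) i 0 = P ?I i 0" if "i \<in> ?L" for i
    using that L det_online_alg_hard_instance_at_0[OF assms(1-3)] by auto
  then have "card {i \<in> ?L. P (short_instance k m) i 0 \<noteq> P ?I i t} \<le> card (moved_long_items P \<mu> k m \<phi>)"
    using \<open>finite ?L\<close> assms(4,5) by (intro card_mono) (auto simp: moved_long_items_def)
  ultimately show ?thesis
    using card_image_le_card_image_add[OF \<open>finite ?L\<close>, of "\<lambda>i. P (short_instance k m) i 0" "\<lambda>i. P ?I i t"] by simp
qed

lemma card_moved_long_items_le_migrations: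
  "of_nat (card (moved_long_items P \<mu> k m \<phi>)) \<le> migrations P (hard_instance \<mu> k m \<phi>)"
proof (rule card_le_migrations)
  let ?I = "hard_instance \<mu> k m \<phi>"
  have L: "selected (2 * k) m \<phi> \<subseteq> {..<2 * k * m}" by (auto simp: selected_def)
  then show "moved_long_items P \<mu> k m \<phi> \<subseteq> {..<length ?I}"
    by (auto simp: moved_long_items_def hard_instance_def)
  fix i assume "i \<in> moved_long_items P \<mu> k m \<phi>"
  then obtain s where "1 \<le> s" "s < \<mu>" "P ?I i s \<noteq> P ?I i 0" and "i \<in> selected (2 * k) m \<phi>"
    by (auto simp: moved_long_items_def)
  moreover have "arr (?I ! i) = 0" "dur (?I ! i) = \<mu>"
    using \<open>i \<in> selected (2 * k) m \<phi>\<close> L by (auto simp: hard_instance_def)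
  ultimately show "\<exists>s t. arr (?I ! i) \<le> s \<and> s < t \<and> t < arr (?I ! i) + dur (?I ! i) \<and> P ?I i s \<noteq> P ?I i t"
    by (intro exI[of _ 0] exI[of _ s]) auto
qed

lemma cost_migrations_hard_instance_ge:
  assumes P: "det_online_alg P" and \<mu>: "1 \<le> \<mu>" and k: "0 < k"
  shows "ennreal (real (2 * m) + real (card ((\<lambda>i. P (short_instance k m) i 0) ` selected (2 * k) m \<phi>)) * (\<mu> - 1))
    \<le> cost P (hard_instance \<mu> k m \<phi>) + ennreal (\<mu> - 1) * migrations P (hard_instance \<mu> k m \<phi>)"
proof -
  have "ennreal (real (2 * m) + real (card ((\<lambda>i. P (short_instance k m) i 0) ` selected (2 * k) m \<phi>)) * (\<mu> - 1))
      \<le> cost P (hard_instance \<mu> k m \<phi>) + of_nat (card (moved_long_items P \<mu> k m \<phi>)) * ennreal (\<mu> - 1)"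
    using bins_hard_instance_short_phase_ge[OF P \<mu> k] bins_hard_instance_long_phase_ge[OF P \<mu> k]
    by (intro cost_ge_two_phases \<mu>)
  also have "of_nat (card (moved_long_items P \<mu> k m \<phi>)) \<le> migrations P (hard_instance \<mu> k m \<phi>)"
    by (rule card_moved_long_items_le_migrations)
  finally show ?thesis by (simp add: mult.commute mult_right_mono)
qed

section \<open>Averaging over the selections\<close>

lemma sum_cost_migrations_hard_instances_ge:
  assumes P: "det_online_alg P" and \<mu>: "1 \<le> \<mu>" and k: "0 < k" and m: "2 \<le> m"
  shows "ennreal (real ((2 * k) ^ m) * (real (2 * m) + real m / 2 * (\<mu> - 1)))
    \<le> (\<Sum>\<phi>\<in>selections (2 * k) m.
          cost P (hard_instance \<mu> k m \<phi>) + ennreal (\<mu> - 1) * migrations P (hard_instance \<mu> k m \<phi>))"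
proof -
  define h where "h i = P (short_instance k m) i 0" for i
  let ?D = "\<lambda>\<phi>. real (card (h ` selected (2 * k) m \<phi>))"
  have "card {j. j < 2 * k * m \<and> h j = h i} \<le> k" for i
  proof -
    have "{j. j < 2 * k * m \<and> h j = h i} = {j. active (short_instance k m) j 0 \<and> P (short_instance k m) j 0 = h i}"
      by (auto simp: h_def short_instance_def active_uniform_items)
    also have "card \<dots> \<le> k"
      using k by (intro det_online_alg_card_bin_le[OF P valid_short_instance]) (simp_all add: short_instance_def)
    finally show ?thesis .
  qed
  then have "real ((2 * k) ^ m) * real m / 2 \<le> (\<Sum>\<phi>\<in>selections (2 * k) m. ?D \<phi>)"
    using k m by (intro sum_card_image_selected_ge)
  then have "real ((2 * k) ^ m) * real (2 * m) + real ((2 * k) ^ m) * real m / 2 * (\<mu> - 1)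
      \<le> real ((2 * k) ^ m) * real (2 * m) + (\<Sum>\<phi>\<in>selections (2 * k) m. ?D \<phi>) * (\<mu> - 1)"
    using \<mu> by (intro add_left_mono mult_right_mono) auto
  also have "\<dots> = (\<Sum>\<phi>\<in>selections (2 * k) m. real (2 * m) + ?D \<phi> * (\<mu> - 1))"
    by (simp add: sum.distrib sum_distrib_right card_selections)
  finally have "real ((2 * k) ^ m) * (real (2 * m) + real m / 2 * (\<mu> - 1))
      \<le> (\<Sum>\<phi>\<in>selections (2 * k) m. real (2 * m) + ?D \<phi> * (\<mu> - 1))"
    by (simp add: algebra_simps)
  then have "ennreal (real ((2 * k) ^ m) * (real (2 * m) + real m / 2 * (\<mu> - 1)))
      \<le> ennreal (\<Sum>\<phi>\<in>selections (2 * k) m. real (2 * m) + ?D \<phi> * (\<mu> - 1))"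
    by (rule ennreal_leI)
  also have "\<dots> = (\<Sum>\<phi>\<in>selections (2 * k) m. ennreal (real (2 * m) + ?D \<phi> * (\<mu> - 1)))"
    using \<mu> by (intro sum_ennreal[symmetric]) simp
  also have "\<dots> \<le> (\<Sum>\<phi>\<in>selections (2 * k) m.
      cost P (hard_instance \<mu> k m \<phi>) + ennreal (\<mu> - 1) * migrations P (hard_instance \<mu> k m \<phi>))"
    unfolding h_def by (intro sum_mono cost_migrations_hard_instance_ge[OF P \<mu> k])
  finally show ?thesis .
qed

lemma sum_expected_cost_migrations_hard_instances_ge:
  assumes A: "randomized_online_alg M A" and \<mu>: "1 \<le> \<mu>" and k: "0 < k" and m: "2 \<le> m"
  shows "ennreal (real ((2 * k) ^ m) * (real (2 * m) + real m / 2 * (\<mu> - 1)))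
    \<le> (\<Sum>\<phi>\<in>selections (2 * k) m. expected_cost M A (hard_instance \<mu> k m \<phi>)
                               + ennreal (\<mu> - 1) * expected_migrations M A (hard_instance \<mu> k m \<phi>))"
proof -
  let ?C = "ennreal (real ((2 * k) ^ m) * (real (2 * m) + real m / 2 * (\<mu> - 1)))"
  let ?I = "hard_instance \<mu> k m"
  have "prob_space M" and det: "\<And>w. w \<in> space M \<Longrightarrow> det_online_alg (A w)"
    and meas: "\<And>\<phi>. (\<lambda>w. cost (A w) (?I \<phi>)) \<in> borel_measurable M"
      "\<And>\<phi>. (\<lambda>w. migrations (A w) (?I \<phi>)) \<in> borel_measurable M"
    using A valid_hard_instance[OF \<mu> k] unfolding randomized_online_alg_def by blast+
  then have "?C = (\<integral>\<^sup>+w. ?C \<partial>M)" by (simp add: prob_space.emeasure_space_1)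
  also have "\<dots> \<le> (\<integral>\<^sup>+w. (\<Sum>\<phi>\<in>selections (2 * k) m.
      cost (A w) (?I \<phi>) + ennreal (\<mu> - 1) * migrations (A w) (?I \<phi>)) \<partial>M)"
    using det by (intro nn_integral_mono sum_cost_migrations_hard_instances_ge[OF _ \<mu> k m])
  also have "\<dots> = (\<Sum>\<phi>\<in>selections (2 * k) m.
      (\<integral>\<^sup>+w. cost (A w) (?I \<phi>) \<partial>M) + ennreal (\<mu> - 1) * (\<integral>\<^sup>+w. migrations (A w) (?I \<phi>) \<partial>M))"
    using meas by (simp add: nn_integral_sum nn_integral_add nn_integral_cmult)
  finally show ?thesis by (simp add: expected_cost_def expected_migrations_def)
qed

lemma hard_instance_ratio_gap:
  fixes \<mu> \<beta> :: real
  assumes "1 \<le> \<mu>" "4 * \<mu> \<le> real k" "0 < r" "0 \<le> \<beta>" "\<beta> < \<mu> / 6"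
  shows "\<beta> * (real (2 * (k * r)) + real r * (\<mu> - 1)) < real (2 * (k * r)) + 3 / 8 * (\<mu> - 1) * real (k * r)"
proof -
  have "\<mu> / 6 * (2 * real k + (\<mu> - 1)) = (2 * (\<mu> * real k) + \<mu> * (\<mu> - 1)) / 6" by (simp add: algebra_simps)
  also have "\<dots> \<le> (2 * (\<mu> * real k) + real k / 4 * (\<mu> - 1)) / 6"
    using assms(1,2) by (intro divide_right_mono add_left_mono mult_right_mono) auto
  also have "\<dots> = (2 + 3 / 8 * (\<mu> - 1)) * real k - 5 / 3 * real k" by (simp add: field_simps)
  also have "\<dots> \<le> (2 + 3 / 8 * (\<mu> - 1)) * real k" using assms(1,2) by simp
  finally have "real r * (\<mu> / 6 * (2 * real k + (\<mu> - 1))) \<le> real r * ((2 + 3 / 8 * (\<mu> - 1)) * real k)"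
    by (intro mult_left_mono) auto
  moreover have "\<beta> * (2 * real k + (\<mu> - 1)) < \<mu> / 6 * (2 * real k + (\<mu> - 1))"
    using assms by (intro mult_strict_right_mono) auto
  then have "real r * (\<beta> * (2 * real k + (\<mu> - 1))) < real r * (\<mu> / 6 * (2 * real k + (\<mu> - 1)))"
    using assms(3) by (intro mult_strict_left_mono) auto
  ultimately show ?thesis by (simp add: algebra_simps)
qed

lemma add_mult_le_ennreal:
  assumes "a \<le> ennreal \<beta> * b" "b \<le> ennreal y" "c \<le> ennreal z" "0 \<le> x" "0 \<le> y" "0 \<le> z"
  shows "a + ennreal x * c \<le> ennreal (max 0 \<beta> * y + x * z)"
proof -
  have "a + ennreal x * c \<le> ennreal \<beta> * ennreal y + ennreal x * ennreal z"
    using assms(1-3) by (intro add_mono mult_left_mono order.trans[OF assms(1)]) auto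
  also have "\<dots> = ennreal (max 0 \<beta> * y + x * z)"
    using assms(4-6) by (simp add: ennreal_max_0 ennreal_mult ennreal_plus)
  finally show ?thesis .
qed

lemma exists_expensive_hard_instance:
  assumes A: "randomized_online_alg M A" and \<mu>: "1 \<le> \<mu>" and k: "4 * \<mu> \<le> real k"
    and r: "0 < r" and m: "m = k * r"
    and mig: "\<And>\<phi>. \<phi> \<in> selections (2 * k) m \<Longrightarrow>
                expected_migrations M A (hard_instance \<mu> k m \<phi>) \<le> ennreal (real m / 8)"
    and \<beta>: "\<beta> < \<mu> / 6"
  shows "\<exists>\<phi>\<in>selections (2 * k) m.
           ennreal \<beta> * OPT (hard_instance \<mu> k m \<phi>) < expected_cost M A (hard_instance \<mu> k m \<phi>)"
proof (rule ccontr)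
  assume cheap: "\<not> ?thesis"
  define B where "B = real (2 * m) + real r * (\<mu> - 1)"
  define K where "K = real ((2 * k) ^ m)"
  define bound where "bound = max 0 \<beta> * B + (\<mu> - 1) * (real m / 8)"
  have "4 \<le> k" using k \<mu> by linarith
  moreover have "k \<le> m" using r by (simp add: m)
  ultimately have "0 < k" "2 \<le> m" by linarith+
  then have "0 \<le> B" "0 < K" "0 \<le> bound" using \<mu> by (simp_all add: B_def K_def bound_def)
  have per_instance: "expected_cost M A (hard_instance \<mu> k m \<phi>)
      + ennreal (\<mu> - 1) * expected_migrations M A (hard_instance \<mu> k m \<phi>) \<le> ennreal bound"
    if "\<phi> \<in> selections (2 * k) m" for \<phi>
    unfolding bound_def using cheap that OPT_hard_instance_le[OF \<mu> \<open>0 < k\<close> m] mig[OF that] \<mu> \<open>0 \<le> B\<close>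
    by (intro add_mult_le_ennreal) (auto simp: B_def not_less)
  have "ennreal (K * (real (2 * m) + real m / 2 * (\<mu> - 1))) \<le> (\<Sum>\<phi>\<in>selections (2 * k) m. ennreal bound)"
    unfolding K_def using sum_expected_cost_migrations_hard_instances_ge[OF A \<mu> \<open>0 < k\<close> \<open>2 \<le> m\<close>]
    by (rule order.trans) (intro sum_mono per_instance)
  also have "\<dots> = ennreal (K * bound)"
    using \<open>0 \<le> bound\<close> by (simp add: K_def card_selections ennreal_mult' ennreal_of_nat_eq_real_of_nat)
  finally have "K * (real (2 * m) + real m / 2 * (\<mu> - 1)) \<le> K * bound"
    using \<open>0 < K\<close> \<open>0 \<le> bound\<close> by (subst (asm) ennreal_le_iff) auto
  then have "real (2 * m) + real m / 2 * (\<mu> - 1) \<le> bound" using \<open>0 < K\<close> by simp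
  then have "real (2 * m) + 3 / 8 * (\<mu> - 1) * real m \<le> max 0 \<beta> * B"
    by (simp add: bound_def field_simps)
  moreover have "max 0 \<beta> * B < real (2 * m) + 3 / 8 * (\<mu> - 1) * real m"
    unfolding B_def m using \<beta> \<mu> by (intro hard_instance_ratio_gap[OF \<mu> k r]) auto
  ultimately show False by linarith
qed

lemma migration_budget:
  fixes g :: "nat \<Rightarrow> real"
  assumes "g \<in> o(\<lambda>n. real n)" "0 < k"
  obtains r where "0 < r" "g (2 * k * (k * r)) \<le> real (k * r) / 8"
proof -
  have "eventually (\<lambda>n. norm (g n) \<le> 1 / (16 * real k) * norm (real n)) at_top"
    using assms by (intro landau_o.smallD) auto
  then obtain N0 where N0: "\<And>n. N0 \<le> n \<Longrightarrow> \<bar>g n\<bar> \<le> 1 / (16 * real k) * real n"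
    unfolding eventually_at_top_linorder by auto
  have "N0 \<le> Suc N0" "Suc N0 \<le> k * Suc N0" "k * Suc N0 \<le> 2 * k * (k * Suc N0)"
    using mult_le_mono1[of 1 k "Suc N0"] assms(2) by simp_all
  then have "\<bar>g (2 * k * (k * Suc N0))\<bar> \<le> 1 / (16 * real k) * real (2 * k * (k * Suc N0))"
    by (intro N0) linarith
  also have "\<dots> = real (k * Suc N0) / 8" using assms(2) by (simp add: field_simps)
  finally show thesis by (intro that[of "Suc N0"]) auto
qed

theorem corollary7:
  fixes \<mu> :: real and M :: "'w measure" and A :: "'w \<Rightarrow> packing_alg" and g :: "nat \<Rightarrow> real"
  assumes "1 \<le> \<mu>"
    and "randomized_online_alg M A"
    and "g \<in> o(\<lambda>n. real n)"
    and "\<forall>I. valid_instance I \<and> has_dur_ratio \<mu> I \<longrightarrow>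
           expected_migrations M A I \<le> ennreal (g (length I))"
  shows "\<forall>\<beta> :: real. \<beta> < \<mu> / 6 \<longrightarrow>
           (\<exists>I. valid_instance I \<and> has_dur_ratio \<mu> I \<and>
                expected_cost M A I > ennreal \<beta> * OPT I)"
proof (intro allI impI)
  fix \<beta> :: real assume \<beta>: "\<beta> < \<mu> / 6"
  define k where "k = nat \<lceil>4 * \<mu>\<rceil>"
  have k: "4 * \<mu> \<le> real k" unfolding k_def by (rule real_nat_ceiling_ge)
  then have "0 < k" using assms(1) by simp
  with assms(3) obtain r where r: "0 < r" "g (2 * k * (k * r)) \<le> real (k * r) / 8"
    by (rule migration_budget)
  define m where "m = k * r"
  have "0 < m" using \<open>0 < k\<close> r(1) by (simp add: m_def)
  have valid: "valid_instance (hard_instance \<mu> k m \<phi>)" for \<phi>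
    using assms(1) \<open>0 < k\<close> by (rule valid_hard_instance)
  have ratio: "has_dur_ratio \<mu> (hard_instance \<mu> k m \<phi>)" if "\<phi> \<in> selections (2 * k) m" for \<phi>
    using assms(1) \<open>0 < k\<close> \<open>0 < m\<close> that by (rule has_dur_ratio_hard_instance)
  have "expected_migrations M A (hard_instance \<mu> k m \<phi>) \<le> ennreal (real m / 8)"
    if "\<phi> \<in> selections (2 * k) m" for \<phi>
  proof -
    have "expected_migrations M A (hard_instance \<mu> k m \<phi>) \<le> ennreal (g (length (hard_instance \<mu> k m \<phi>)))"
      using assms(4) valid ratio[OF that] by blast
    also have "\<dots> \<le> ennreal (real m / 8)" using r(2) by (simp add: hard_instance_def m_def ennreal_leI)
    finally show ?thesis .
  qed
  then obtain \<phi> where "\<phi> \<in> selections (2 * k) m"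
    and "ennreal \<beta> * OPT (hard_instance \<mu> k m \<phi>) < expected_cost M A (hard_instance \<mu> k m \<phi>)"
    using exists_expensive_hard_instance[OF assms(2,1) k r(1) m_def _ \<beta>] by blast
  then show "\<exists>I. valid_instance I \<and> has_dur_ratio \<mu> I \<and> expected_cost M A I > ennreal \<beta> * OPT I"
    using valid ratio by blast
qed

end
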